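(* Let $G=(V,E,X)$ be a spatial graph with $E\neq\emptyset$, let $(R,A,k)\in\mathrm{Sim}(p)$ and $G'=\psi(G,(R,A,k))=(V,E,kRX+A)$. Assume $0<\sup_{\theta\ge0} d_B(PD(G),PD(f_\theta(G)))<\infty$ and that this supremum is attained. Then for every $\theta\ge0$, $S_{k\theta}(G')=S_\theta(G)$; consequently $\arg\min_{\beta\ge0}S_\beta(G')=k\cdot\arg\min_{\theta\ge0}S_\theta(G)$. In particular, if $\theta^*$ minimizes $\theta\mapsto S_\theta(G)$, then $\beta^*=k\theta^*$ minimizes $\beta\mapsto S_\beta(G')$, and the topological spatial graph coarsening $F(G)=f_{\theta^*}(G)$ is equivariant: $$F(\psi(G,(R,A,k)))=f_{k\theta^*}(G')=\psi(F(G),(R,A,k)).$$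
   Context: A spatial graph is a triple $G=(V,E,X)$ with finite node set $V$, undirected edge set $E\subseteq V\times V$, positions $x_u\in\mathbb{R}^p$, and edge lengths $\ell_{u,v}=\|x_u-x_v\|$. For $\theta\ge0$, $sub(G,\theta)=(V,\{(u,v)\in E:\ell_{u,v}\le\theta\})$. Coarsening: $f_\theta(G)=(f^V_\theta(G),f^E_\theta(G),f^X_\theta(G))$, where $f^V_\theta(G)=\{V_1,\dots,V_K\}$ is the partition of $V$ into vertex sets of connected components of $sub(G,\theta)$ (hypernodes); $f^E_\theta(G)$ contains $(V_i,V_j)$ for distinct hypernodes iff some $u\in V_i$, $v\in V_j$ have $(u,v)\in E$; positions are either average positioning $f^X_\theta(G)_i=\frac1{|V_i|}\sum_{u\in V_i}x_u$ or degree positioning $f^X_\theta(G)_i=x_u$, $u=\arg\max_{v\in V_i}\deg(v)$ (degree in $(V,E)$, ties broken by a fixed rule depending only on $(V,E)$). The coarsened graph is a spatial graph with Euclidean edge lengths between hypernode positions. Similarity action: for $R\in O_p(\mathbb{R})$, $A\in\mathbb{R}^p$, $k>0$, $\psi(G,(R,A,k))$ replaces each position $x$ by $kRx+A$ (for any spatial graph, including coarsened ones). Shortest-path distance $d_G(u,v)$: minimal total length of a path from $u$ to $v$ in $(V,E)$ ($0$ if $u=v$, $+\infty$ if none). Triangle-aware filtration $\widetilde{\mathcal C}(G)$: simplex $\sigma\subseteq V$ enters at scale $t(\sigma)$, with $t(\{u\})=0$, $t(\{u,v\})=d_G(u,v)$, $t(\{u,v,w\})=\min\{d_G(u,v)+d_G(v,w),d_G(u,w)+d_G(v,w),d_G(u,v)+d_G(u,w)\}$,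 and for dimension $\ge3$, $t(\sigma)$ is the max of $t$ over its codimension-one faces. $PD(G)$ is the persistence diagram (multiset of points $(r_b,r_d)$, over a fixed set of homological dimensions) of this filtration. Bottleneck distance: for diagrams $\mu,\nu$ and diagonal $\Delta=\{(a,a):a\in\mathbb{R}\}$, $d_B(\mu,\nu)=\inf_{\pi}\sup_{x}\|x-\pi(x)\|_\infty$, the infimum over bijections $\pi:\mu\cup\Delta\to\nu\cup\Delta$. Score: $S_\theta(G)=\frac{|f^E_\theta(G)|}{|E|}+\lambda(G)\,d_B(PD(G),PD(f_\theta(G)))$ with $\lambda(G)=\big[\max_{\theta\ge0}d_B(PD(G),PD(f_\theta(G)))\big]^{-1}$. The topological spatial graph coarsening is $F(G)=f_{\theta^*}(G)$ with $\theta^*\in\arg\min_{\theta\ge0}S_\theta(G)$. *)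

theory Defs
  imports "HOL-Analysis.Analysis"
begin

text \<open>A spatial graph (V, E, X): finite vertex set V, edge set E of pairs in V x V
  (read as undirected edges), positions X in real^p.\<close>

type_synonym ('v, 'p) sgraph = "'v set \<times> ('v \<times> 'v) set \<times> ('v \<Rightarrow> real ^ 'p)"

definition sg_wf :: "('v, 'p::finite) sgraph \<Rightarrow> bool" where
  "sg_wf G = (case G of (V, E, X) \<Rightarrow> finite V \<and> E \<subseteq> V \<times> V)"

definition len :: "('v \<Rightarrow> real ^ 'p::finite) \<Rightarrow> 'v \<Rightarrow> 'v \<Rightarrow> real" where
  "len X u v = norm (X u - X v)"

text \<open>Number of undirected edges (a pair and its reverse are the same edge).\<close>
definition ecount :: "('v \<times> 'v) set \<Rightarrow> nat" where
  "ecount E = card ((\<lambda>(u, v). {u, v}) ` E)"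

definition subE :: "('v \<times> 'v) set \<Rightarrow> ('v \<Rightarrow> real ^ 'p::finite) \<Rightarrow> real \<Rightarrow> ('v \<times> 'v) set" where
  "subE E X \<theta> = {(u, v) \<in> E. len X u v \<le> \<theta>}"

definition hypernodes :: "'v set \<Rightarrow> ('v \<times> 'v) set \<Rightarrow> ('v \<Rightarrow> real ^ 'p::finite) \<Rightarrow> real \<Rightarrow> 'v set set" where
  "hypernodes V E X \<theta> = V // ((subE E X \<theta> \<union> converse (subE E X \<theta>))\<^sup>*)"

definition coarseE :: "'v set \<Rightarrow> ('v \<times> 'v) set \<Rightarrow> ('v \<Rightarrow> real ^ 'p::finite) \<Rightarrow> real \<Rightarrow> ('v set \<times> 'v set) set" where
  "coarseE V E X \<theta> = {(A, B). A \<in> hypernodes V E X \<theta> \<and> B \<in> hypernodes V E X \<theta> \<and> A \<noteq> B \<and>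
      (\<exists>u\<in>A. \<exists>v\<in>B. (u, v) \<in> E)}"

definition deg :: "'v set \<Rightarrow> ('v \<times> 'v) set \<Rightarrow> 'v \<Rightarrow> nat" where
  "deg V E v = card {w \<in> V. (v, w) \<in> E \<or> (w, v) \<in> E}"

text \<open>Positioning rule: average positioning, or degree positioning with a tie-breaking rule
  tb V E S (depending only on (V,E)) choosing an element of the set S of max-degree vertices.\<close>
datatype 'v positioning = AvgPos | DegPos "'v set \<Rightarrow> ('v \<times> 'v) set \<Rightarrow> 'v set \<Rightarrow> 'v"

definition valid_pos :: "'v positioning \<Rightarrow> bool" where
  "valid_pos P = (case P of AvgPos \<Rightarrow> True
     | DegPos tb \<Rightarrow> (\<forall>V E S. S \<noteq> {} \<longrightarrow> tb V E S \<in> S))"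

definition coarseX :: "'v positioning \<Rightarrow> 'v set \<Rightarrow> ('v \<times> 'v) set \<Rightarrow> ('v \<Rightarrow> real ^ 'p::finite) \<Rightarrow> 'v set \<Rightarrow> real ^ 'p::finite" where
  "coarseX P V E X A = (case P of
      AvgPos \<Rightarrow> (1 / real (card A)) *\<^sub>R (\<Sum>u\<in>A. X u)
    | DegPos tb \<Rightarrow> X (tb V E {u \<in> A. \<forall>w\<in>A. deg V E w \<le> deg V E u}))"

definition coarsen :: "'v positioning \<Rightarrow> real \<Rightarrow> ('v, 'p::finite) sgraph \<Rightarrow> ('v set, 'p) sgraph" where
  "coarsen P \<theta> G = (case G of (V, E, X) \<Rightarrow>
      (hypernodes V E X \<theta>, coarseE V E X \<theta>, coarseX P V E X))"

definition simact :: "real ^ 'p::finite ^ 'p \<Rightarrow> real ^ 'p::finite \<Rightarrow> real \<Rightarrow> ('v, 'p::finite) sgraph \<Rightarrow> ('v, 'p::finite) sgraph" where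
  "simact R A k G = (case G of (V, E, X) \<Rightarrow> (V, E, \<lambda>u. k *\<^sub>R (R *v X u) + A))"

text \<open>Equality of spatial graphs: same nodes, same edges, same positions at the nodes
  (positions outside V are meaningless).\<close>
definition sg_eq :: "('v, 'p::finite) sgraph \<Rightarrow> ('v, 'p::finite) sgraph \<Rightarrow> bool" where
  "sg_eq G H = (fst G = fst H \<and> fst (snd G) = fst (snd H) \<and>
      (\<forall>v\<in>fst G. snd (snd G) v = snd (snd H) v))"

definition walk :: "('v \<times> 'v) set \<Rightarrow> 'v \<Rightarrow> 'v \<Rightarrow> 'v list \<Rightarrow> bool" where
  "walk E u v ps = (ps \<noteq> [] \<and> hd ps = u \<and> last ps = v \<and>
     (\<forall>i < length ps - 1. (ps ! i, ps ! (i + 1)) \<in> E \<or> (ps ! (i + 1), ps ! i) \<in> E))"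

definition wlen :: "('v \<Rightarrow> real ^ 'p::finite) \<Rightarrow> 'v list \<Rightarrow> real" where
  "wlen X ps = (\<Sum>i < length ps - 1. len X (ps ! i) (ps ! (i + 1)))"

text \<open>Shortest-path distance, +infinity if no path.\<close>
definition spd :: "('v, 'p::finite) sgraph \<Rightarrow> 'v \<Rightarrow> 'v \<Rightarrow> ereal" where
  "spd G u v = (case G of (V, E, X) \<Rightarrow>
      Inf {ereal (wlen X ps) | ps. walk E u v ps \<and> set ps \<subseteq> V})"

definition tbase :: "('v \<Rightarrow> 'v \<Rightarrow> ereal) \<Rightarrow> 'v set \<Rightarrow> ereal" where
  "tbase d \<sigma> = (if card \<sigma> = 1 then 0
     else if card \<sigma> = 2 then Min {d u v | u v. \<sigma> = {u, v} \<and> u \<noteq> v}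
     else Min {d u v + d v w | u v w. \<sigma> = {u, v, w} \<and> u \<noteq> v \<and> v \<noteq> w \<and> u \<noteq> w})"

primrec tvn :: "('v \<Rightarrow> 'v \<Rightarrow> ereal) \<Rightarrow> nat \<Rightarrow> 'v set \<Rightarrow> ereal" where
  "tvn d 0 \<sigma> = tbase d \<sigma>"
| "tvn d (Suc n) \<sigma> = (if card \<sigma> \<le> 3 then tbase d \<sigma>
      else Max ((\<lambda>v. tvn d n (\<sigma> - {v})) ` \<sigma>))"

definition ftime :: "('v, 'p::finite) sgraph \<Rightarrow> 'v set \<Rightarrow> ereal" where
  "ftime G \<sigma> = tvn (spd G) (card \<sigma>) \<sigma>"

definition cplx :: "('v, 'p::finite) sgraph \<Rightarrow> real \<Rightarrow> 'v set set" where
  "cplx G s = {\<sigma>. \<sigma> \<subseteq> fst G \<and> \<sigma> \<noteq> {} \<and> ftime G \<sigma> \<le> ereal s}"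

text \<open>GF(2)-chains are sets of simplices (sum = symmetric difference).\<close>
definition ksimp :: "'v set set \<Rightarrow> nat \<Rightarrow> 'v set set" where
  "ksimp K k = {\<sigma> \<in> K. card \<sigma> = Suc k}"

definition bd :: "'v set set \<Rightarrow> 'v set set" where
  "bd c = {\<tau>. \<tau> \<noteq> {} \<and> odd (card {\<sigma> \<in> c. \<tau> \<subseteq> \<sigma> \<and> card \<sigma> = Suc (card \<tau>)})}"

definition cycles :: "'v set set \<Rightarrow> nat \<Rightarrow> 'v set set set" where
  "cycles K k = {c. c \<subseteq> ksimp K k \<and> bd c = {}}"

definition bounds :: "'v set set \<Rightarrow> nat \<Rightarrow> 'v set set set" where
  "bounds K k = bd ` Pow (ksimp K (Suc k))"

text \<open>Dimension of a finite GF(2)-vector space: it has 2^n elements.\<close>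
definition f2dim :: "'a set \<Rightarrow> nat" where
  "f2dim S = (THE n. card S = 2 ^ n)"

text \<open>Rank of H_k(K) -> H_k(L) for K a subcomplex of L: dim Z_k(K) - dim (Z_k(K) \<inter> B_k(L)).\<close>
definition prank :: "'v set set \<Rightarrow> 'v set set \<Rightarrow> nat \<Rightarrow> int" where
  "prank K L k = int (f2dim (cycles K k)) - int (f2dim (cycles K k \<inter> bounds L k))"

definition rk :: "('v, 'p::finite) sgraph \<Rightarrow> nat \<Rightarrow> real \<Rightarrow> real \<Rightarrow> int" where
  "rk G k s t = prank (cplx G s) (cplx G t) k"

text \<open>Multiplicity of (b, d) in the degree-k diagram (b real, b < d, d possibly infinite).\<close>
definition mult :: "('v, 'p::finite) sgraph \<Rightarrow> nat \<Rightarrow> real \<Rightarrow> ereal \<Rightarrow> int" where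
  "mult G k b d = (case d of
      ereal d' \<Rightarrow> (THE m. eventually (\<lambda>\<epsilon>. rk G k b (d' - \<epsilon>) - rk G k (b - \<epsilon>) (d' - \<epsilon>)
                        - rk G k b d' + rk G k (b - \<epsilon>) d' = m) (at_right 0))
    | PInfty \<Rightarrow> (THE m. eventually (\<lambda>\<epsilon>. eventually (\<lambda>T. rk G k b T - rk G k (b - \<epsilon>) T = m) at_top)
                        (at_right 0))
    | MInfty \<Rightarrow> 0)"

text \<open>Persistence diagram over the fixed set D of homological dimensions, as a multiplicity
  function on points (b, d).\<close>
definition PD :: "nat set \<Rightarrow> ('v, 'p::finite) sgraph \<Rightarrow> ereal \<times> ereal \<Rightarrow> nat" where
  "PD D G x = (if (\<exists>b. fst x = ereal b) \<and> fst x < snd x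
      then nat (\<Sum>k\<in>D. mult G k (real_of_ereal (fst x)) (snd x)) else 0)"

text \<open>Elements of mu \<union> Delta: copies of the points of mu (with multiplicity) and the diagonal points.\<close>
definition slots :: "(ereal \<times> ereal \<Rightarrow> nat) \<Rightarrow> ((ereal \<times> ereal) \<times> nat + real) set" where
  "slots \<mu> = Inl ` {(x, i). i < \<mu> x} \<union> Inr ` UNIV"

fun slotpt :: "((ereal \<times> ereal) \<times> nat + real) \<Rightarrow> ereal \<times> ereal" where
  "slotpt (Inl (x, i)) = x"
| "slotpt (Inr a) = (ereal a, ereal a)"

definition cdist :: "ereal \<Rightarrow> ereal \<Rightarrow> ereal" where
  "cdist a b = (if a = b then 0 else \<bar>a - b\<bar>)"

definition linf :: "ereal \<times> ereal \<Rightarrow> ereal \<times> ereal \<Rightarrow> ereal" where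
  "linf x y = max (cdist (fst x) (fst y)) (cdist (snd x) (snd y))"

definition bottleneck :: "(ereal \<times> ereal \<Rightarrow> nat) \<Rightarrow> (ereal \<times> ereal \<Rightarrow> nat) \<Rightarrow> ereal" where
  "bottleneck \<mu> \<nu> = (INF \<pi> \<in> {\<pi>. bij_betw \<pi> (slots \<mu>) (slots \<nu>)}.
      SUP x \<in> slots \<mu>. linf (slotpt x) (slotpt (\<pi> x)))"

definition dBth :: "'v positioning \<Rightarrow> nat set \<Rightarrow> ('v, 'p::finite) sgraph \<Rightarrow> real \<Rightarrow> ereal" where
  "dBth P D G \<theta> = bottleneck (PD D G) (PD D (coarsen P \<theta> G))"

definition dBmax :: "'v positioning \<Rightarrow> nat set \<Rightarrow> ('v, 'p::finite) sgraph \<Rightarrow> ereal" where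
  "dBmax P D G = (SUP \<theta> \<in> {0..}. dBth P D G \<theta>)"

definition score :: "'v positioning \<Rightarrow> nat set \<Rightarrow> ('v, 'p::finite) sgraph \<Rightarrow> real \<Rightarrow> real" where
  "score P D G \<theta> = real (ecount (fst (snd (coarsen P \<theta> G)))) / real (ecount (fst (snd G)))
      + (1 / real_of_ereal (dBmax P D G)) * real_of_ereal (dBth P D G \<theta>)"

definition is_minimizer :: "(real \<Rightarrow> real) \<Rightarrow> real \<Rightarrow> bool" where
  "is_minimizer f \<theta> = (\<theta> \<ge> 0 \<and> (\<forall>\<theta>' \<ge> 0. f \<theta> \<le> f \<theta>'))"

end

theory Submission
  imports Defs
begin

text \<open>A similarity \<open>x \<mapsto> k R x + A\<close> multiplies every edge length by \<open>k\<close>. Hence the threshold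
  subgraph of \<open>G'\<close> at \<open>k \<theta>\<close> is that of \<open>G\<close> at \<open>\<theta>\<close>: the coarsenings have the same hypernodes
  and edges, and their positions differ by the same similarity. Shortest-path distances and
  filtration times are all multiplied by \<open>k\<close>, so every persistence diagram involved is the image
  of the old one under \<open>(b, d) \<mapsto> (k b, k d)\<close>. Bottleneck distances, and with them their
  maximum \<open>1 / \<lambda>\<close>, are multiplied by \<open>k\<close>, which leaves the score invariant under \<open>\<theta> \<mapsto> k \<theta>\<close>.\<close>

section \<open>Positive scalings of the extended reals\<close>

lemma mono_ereal_mult_pos: "0 < k \<Longrightarrow> mono (\<lambda>x::ereal. ereal k * x)"
  by (simp add: mono_def ereal_mult_left_mono)

lemma bij_ereal_mult_pos:
  assumes "0 < k" shows "bij (\<lambda>x::ereal. ereal k * x)"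
proof (rule o_bij)
  show "(\<lambda>x. ereal (1 / k) * x) \<circ> (\<lambda>x. ereal k * x) = id"
    using assms by (auto simp: fun_eq_iff mult.assoc[symmetric])
  show "(\<lambda>x. ereal k * x) \<circ> (\<lambda>x. ereal (1 / k) * x) = id"
    using assms by (auto simp: fun_eq_iff mult.assoc[symmetric])
qed

lemma ereal_mult_pos_Inf: "0 < k \<Longrightarrow> ereal k * Inf S = Inf ((\<lambda>x. ereal k * x) ` S)"
  by (rule mono_bij_Inf[OF mono_ereal_mult_pos bij_ereal_mult_pos])

lemma ereal_mult_pos_Sup: "0 < k \<Longrightarrow> ereal k * Sup S = Sup ((\<lambda>x. ereal k * x) ` S)"
  by (cases "S = {}") (simp_all add: bot_ereal_def Sup_ereal_mult_left'[where f = id, simplified])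

lemma ereal_mult_pos_Min:
  "0 < k \<Longrightarrow> finite S \<Longrightarrow> S \<noteq> {} \<Longrightarrow> ereal k * Min S = Min ((\<lambda>x. ereal k * x) ` S)"
  by (rule mono_Min_commute[OF mono_ereal_mult_pos])

lemma ereal_mult_pos_Max:
  "0 < k \<Longrightarrow> finite S \<Longrightarrow> S \<noteq> {} \<Longrightarrow> ereal k * Max S = Max ((\<lambda>x. ereal k * x) ` S)"
  by (rule mono_Max_commute[OF mono_ereal_mult_pos])

lemma ereal_mult_pos_add: "0 < k \<Longrightarrow> ereal k * (x + y) = ereal k * x + ereal k * y"
  by (cases x; cases y) (auto simp: algebra_simps)

lemma real_of_ereal_mult: "real_of_ereal (ereal k * x) = k * real_of_ereal x"
  by (cases x) auto

section \<open>Shortest paths and filtration times\<close>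

definition similarity :: "real ^ 'p ^ 'p \<Rightarrow> real ^ 'p \<Rightarrow> real \<Rightarrow> real ^ 'p \<Rightarrow> real ^ 'p::finite" where
  "similarity R A k x = k *\<^sub>R (R *v x) + A"

lemma simact_similarity: "simact R A k (V, E, X) = (V, E, similarity R A k \<circ> X)"
  by (simp add: simact_def similarity_def o_def)

lemma len_similarity:
  assumes "orthogonal_matrix R" "0 < k"
  shows "len (similarity R A k \<circ> X) u v = k * len X u v"
proof -
  have "similarity R A k (X u) - similarity R A k (X v) = k *\<^sub>R (R *v (X u - X v))"
    by (simp add: similarity_def algebra_simps)
  then show ?thesis
    using assms orthogonal_transformation_norm[of "(*v) R"]
    by (simp add: len_def orthogonal_transformation_matrix)
qed

lemma wlen_rescale:
  assumes "\<And>u v. u \<in> V \<Longrightarrow> v \<in> V \<Longrightarrow> len X' u v = k * len X u v" and "set ps \<subseteq> V"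
  shows "wlen X' ps = k * wlen X ps"
proof -
  have "ps ! i \<in> V" if "i < length ps" for i
    using assms(2) that by auto
  then show ?thesis
    unfolding wlen_def sum_distrib_left by (auto intro!: sum.cong assms(1))
qed

lemma spd_rescale:
  assumes "0 < k" and "\<And>u v. u \<in> V \<Longrightarrow> v \<in> V \<Longrightarrow> len X' u v = k * len X u v"
  shows "spd (V, E, X') u v = ereal k * spd (V, E, X) u v"
proof -
  let ?W = "{ps. walk E u v ps \<and> set ps \<subseteq> V}"
  have "(\<lambda>ps. ereal (wlen X' ps)) ` ?W = (\<lambda>x. ereal k * x) ` (\<lambda>ps. ereal (wlen X ps)) ` ?W"
    unfolding image_image using wlen_rescale[of V X' k X, OF assms(2)] by (intro image_cong) auto
  then show ?thesis
    by (simp add: spd_def setcompr_eq_image ereal_mult_pos_Inf[OF assms(1)])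
qed

lemma tbase_rescale:
  assumes "0 < k" and "finite \<sigma>" and "\<sigma> \<noteq> {}" and "card \<sigma> \<le> 3"
  shows "tbase (\<lambda>u v. ereal k * d u v) \<sigma> = ereal k * tbase d \<sigma>"
proof -
  consider "card \<sigma> = 1" | "card \<sigma> = 2" | "card \<sigma> = 3"
    using assms(2-4) card_0_eq[of \<sigma>] by linarith
  then show ?thesis
  proof cases
    case 1
    then show ?thesis by (simp add: tbase_def)
  next
    case 2
    let ?S = "{d u v | u v. \<sigma> = {u, v} \<and> u \<noteq> v}"
    have "finite ?S"
      by (rule finite_subset[of _ "(\<lambda>(u, v). d u v) ` (\<sigma> \<times> \<sigma>)"]) (auto simp: assms(2))
    moreover have "?S \<noteq> {}"
      using 2 by (auto simp: card_2_iff)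
    moreover have "{ereal k * d u v | u v. \<sigma> = {u, v} \<and> u \<noteq> v} = (\<lambda>x. ereal k * x) ` ?S"
      by blast
    ultimately show ?thesis
      using 2 by (simp add: tbase_def ereal_mult_pos_Min[OF assms(1)])
  next
    case 3
    let ?S = "{d u v + d v w | u v w. \<sigma> = {u, v, w} \<and> u \<noteq> v \<and> v \<noteq> w \<and> u \<noteq> w}"
    have "finite ?S"
      by (rule finite_subset[of _ "(\<lambda>(u, v, w). d u v + d v w) ` (\<sigma> \<times> \<sigma> \<times> \<sigma>)"])
        (auto simp: assms(2))
    moreover have "?S \<noteq> {}"
      using 3 by (auto simp: card_3_iff)
    moreover have "{ereal k * d u v + ereal k * d v w | u v w.
        \<sigma> = {u, v, w} \<and> u \<noteq> v \<and> v \<noteq> w \<and> u \<noteq> w} = (\<lambda>x. ereal k * x) ` ?S"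
      unfolding ereal_mult_pos_add[OF assms(1), symmetric] by blast
    ultimately show ?thesis
      using 3 by (simp add: tbase_def ereal_mult_pos_Min[OF assms(1)])
  qed
qed

lemma tvn_rescale:
  assumes "0 < k" and "finite \<sigma>" and "\<sigma> \<noteq> {}"
  shows "tvn (\<lambda>u v. ereal k * d u v) (card \<sigma>) \<sigma> = ereal k * tvn d (card \<sigma>) \<sigma>"
  using assms(2,3)
proof (induction n \<equiv> "card \<sigma>" arbitrary: \<sigma>)
  case 0
  then show ?case by simp
next
  case (Suc n)
  show ?case
  proof (cases "card \<sigma> \<le> 3")
    case True
    then show ?thesis
      using tbase_rescale[OF assms(1) Suc.prems] by (simp flip: Suc.hyps)
  next
    case False
    have faces: "tvn (\<lambda>u v. ereal k * d u v) n (\<sigma> - {v}) = ereal k * tvn d n (\<sigma> - {v})"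
      if "v \<in> \<sigma>" for v
    proof -
      have card: "card (\<sigma> - {v}) = n"
        using that Suc.hyps(2) Suc.prems(1) by (simp add: card_Diff_singleton)
      moreover have "\<sigma> - {v} \<noteq> {}"
        using card False Suc.hyps(2) by (intro notI) simp
      ultimately show ?thesis
        using Suc.hyps(1)[of "\<sigma> - {v}"] Suc.prems(1) by simp
    qed
    have "Max ((\<lambda>v. tvn (\<lambda>u v. ereal k * d u v) n (\<sigma> - {v})) ` \<sigma>)
        = ereal k * Max ((\<lambda>v. tvn d n (\<sigma> - {v})) ` \<sigma>)"
      using Suc.prems by (simp add: faces ereal_mult_pos_Max[OF assms(1)] image_image cong: image_cong)
    then show ?thesis
      using False by (simp flip: Suc.hyps(2))
  qed
qed

lemma ftime_rescale:
  assumes "0 < k" and "\<And>u v. u \<in> V \<Longrightarrow> v \<in> V \<Longrightarrow> len X' u v = k * len X u v"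
    and "finite \<sigma>" and "\<sigma> \<noteq> {}"
  shows "ftime (V, E, X') \<sigma> = ereal k * ftime (V, E, X) \<sigma>"
proof -
  have "spd (V, E, X') = (\<lambda>u v. ereal k * spd (V, E, X) u v)"
    using spd_rescale[OF assms(1,2)] by blast
  then show ?thesis
    unfolding ftime_def using tvn_rescale[OF assms(1,3,4)] by simp
qed

lemma cplx_rescale:
  assumes "0 < k" and "\<And>u v. u \<in> V \<Longrightarrow> v \<in> V \<Longrightarrow> len X' u v = k * len X u v"
    and "finite V"
  shows "cplx (V, E, X') (k * s) = cplx (V, E, X) s"
proof -
  have "ftime (V, E, X') \<sigma> \<le> ereal (k * s) \<longleftrightarrow> ftime (V, E, X) \<sigma> \<le> ereal s"
    if "\<sigma> \<subseteq> V" "\<sigma> \<noteq> {}" for \<sigma>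
    using ftime_rescale[OF assms(1,2) finite_subset[OF that(1) assms(3)] that(2)] assms(1)
    by (simp add: ereal_mult_le_mult_iff flip: times_ereal.simps(1))
  then show ?thesis
    unfolding cplx_def by auto
qed

lemma rk_rescale:
  assumes "0 < k" and "\<And>u v. u \<in> V \<Longrightarrow> v \<in> V \<Longrightarrow> len X' u v = k * len X u v"
    and "finite V"
  shows "rk (V, E, X') j (k * s) (k * t) = rk (V, E, X) j s t"
  by (simp add: rk_def cplx_rescale[OF assms])

section \<open>Persistence diagrams and bottleneck distance\<close>

lemma eventually_at_right_0_rescale:
  fixes c :: real
  assumes "0 < c"
  shows "eventually (\<lambda>e. P (c * e)) (at_right 0) \<longleftrightarrow> eventually P (at_right 0)"
  using filtermap_times_pos_at_right[OF assms, of 0] by (simp flip: eventually_filtermap)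

lemma filtermap_times_pos_at_top:
  fixes c :: real
  assumes "0 < c"
  shows "filtermap (times c) at_top = at_top"
  using assms
  by (intro filtermap_fun_inverse[where g = "\<lambda>x. inverse c * x"])
    (auto intro!: filterlim_ident filterlim_tendsto_pos_mult_at_top)

lemma eventually_at_top_rescale:
  fixes c :: real
  assumes "0 < c"
  shows "eventually (\<lambda>T. P (c * T)) at_top \<longleftrightarrow> eventually P at_top"
  using filtermap_times_pos_at_top[OF assms] by (simp flip: eventually_filtermap)

lemma mult_rescale:
  assumes k: "0 < k" and ranks: "\<And>s t. rk G' j (k * s) (k * t) = rk G j s t"
  shows "mult G' j (k * b) (ereal k * d) = mult G j b d"
proof (cases d)
  case (real d')
  have "eventually (\<lambda>e. rk G' j (k * b) (k * d' - e) - rk G' j (k * b - e) (k * d' - e)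
          - rk G' j (k * b) (k * d') + rk G' j (k * b - e) (k * d') = m) (at_right 0)
    \<longleftrightarrow> eventually (\<lambda>e. rk G j b (d' - e) - rk G j (b - e) (d' - e)
          - rk G j b d' + rk G j (b - e) d' = m) (at_right 0)" for m
    by (subst eventually_at_right_0_rescale[OF k, symmetric])
      (simp add: ranks flip: right_diff_distrib)
  then show ?thesis
    using real by (simp add: mult_def)
next
  case PInf
  have "eventually (\<lambda>T. rk G' j (k * b) T - rk G' j (k * b - k * e) T = m) at_top
    \<longleftrightarrow> eventually (\<lambda>T. rk G j b T - rk G j (b - e) T = m) at_top" for e m
    by (subst eventually_at_top_rescale[OF k, symmetric])
      (simp add: ranks flip: right_diff_distrib)
  then have "eventually (\<lambda>e. eventually (\<lambda>T. rk G' j (k * b) T - rk G' j (k * b - e) T = m) at_top)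
      (at_right 0)
    \<longleftrightarrow> eventually (\<lambda>e. eventually (\<lambda>T. rk G j b T - rk G j (b - e) T = m) at_top) (at_right 0)"
    for m
    by (subst eventually_at_right_0_rescale[OF k, symmetric]) simp
  then show ?thesis
    using PInf k by (simp add: mult_def)
next
  case MInf
  then show ?thesis
    using k by (simp add: mult_def)
qed

definition scale_point :: "real \<Rightarrow> ereal \<times> ereal \<Rightarrow> ereal \<times> ereal" where
  "scale_point c x = (ereal c * fst x, ereal c * snd x)"

lemma scale_point_scale_point: "scale_point c (scale_point c' x) = scale_point (c * c') x"
  by (simp add: scale_point_def mult.assoc[symmetric])

lemma scale_point_1: "scale_point 1 x = x"
  by (simp add: scale_point_def one_ereal_def[symmetric])

lemma PD_rescale:
  assumes k: "0 < k" and "\<And>u v. u \<in> V \<Longrightarrow> v \<in> V \<Longrightarrow> len X' u v = k * len X u v"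
    and "finite V"
  shows "PD D (V, E, X') (scale_point k x) = PD D (V, E, X) x"
proof (cases "\<exists>b. fst x = ereal b")
  case True
  then obtain b where b: "fst x = ereal b" ..
  have "mult (V, E, X') j (k * b) (ereal k * snd x) = mult (V, E, X) j b (snd x)" for j
    by (rule mult_rescale[OF k rk_rescale[OF assms]])
  moreover have "ereal k * fst x < ereal k * snd x \<longleftrightarrow> fst x < snd x"
    using k by (simp add: ereal_mult_le_mult_iff flip: not_le)
  ultimately show ?thesis
    using b by (simp add: PD_def scale_point_def)
next
  case False
  then have "fst x = \<infinity> \<or> fst x = -\<infinity>"
    by (cases "fst x") auto
  then have "\<nexists>b. ereal k * fst x = ereal b"
    using k by auto
  then show ?thesis
    using False by (simp add: PD_def scale_point_def)
qed

fun scale_slot :: "real \<Rightarrow> (ereal \<times> ereal) \<times> nat + real \<Rightarrow> (ereal \<times> ereal) \<times> nat + real" where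
  "scale_slot c (Inl (x, i)) = Inl (scale_point c x, i)"
| "scale_slot c (Inr a) = Inr (c * a)"

lemma scale_slot_scale_slot: "scale_slot c (scale_slot c' s) = scale_slot (c * c') s"
  by (cases s) (auto simp: scale_point_scale_point)

lemma scale_slot_1: "scale_slot 1 s = s"
  by (cases s) (auto simp: scale_point_1)

lemma slots_rescale:
  assumes "0 < k" and "\<And>x. \<mu>' (scale_point k x) = \<mu> x"
  shows "slots \<mu>' = scale_slot k ` slots \<mu>"
proof
  show "scale_slot k ` slots \<mu> \<subseteq> slots \<mu>'"
    using assms(2) by (auto simp: slots_def)
  have unscale: "scale_point k (scale_point (1 / k) y) = y" for y
    using assms(1) by (simp add: scale_point_scale_point scale_point_1)
  show "slots \<mu>' \<subseteq> scale_slot k ` slots \<mu>"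
  proof
    fix s assume s: "s \<in> slots \<mu>'"
    show "s \<in> scale_slot k ` slots \<mu>"
    proof (cases s)
      case (Inl p)
      then obtain y i where "s = Inl (y, i)" "i < \<mu>' y"
        using s by (auto simp: slots_def)
      then show ?thesis
        using assms(2)[of "scale_point (1 / k) y"]
        by (intro image_eqI[of _ _ "Inl (scale_point (1 / k) y, i)"]) (auto simp: unscale slots_def)
    next
      case (Inr a)
      then show ?thesis
        using assms(1) by (intro image_eqI[of _ _ "Inr (a / k)"]) (auto simp: slots_def)
    qed
  qed
qed

lemma slotpt_scale_slot: "slotpt (scale_slot c s) = scale_point c (slotpt s)"
  by (cases s) (auto simp: scale_point_def)
lemma cdist_rescale:
  assumes "0 < k"
  shows "cdist (ereal k * a) (ereal k * b) = ereal k * cdist a b"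
  using assms by (cases a; cases b) (auto simp: cdist_def abs_mult simp flip: right_diff_distrib)

lemma linf_rescale:
  assumes "0 < k"
  shows "linf (scale_point k x) (scale_point k y) = ereal k * linf x y"
proof -
  have "max (ereal k * p) (ereal k * q) = ereal k * max p q" for p q
    using assms by (auto simp: max_def ereal_mult_le_mult_iff)
  then show ?thesis
    by (simp add: linf_def scale_point_def cdist_rescale[OF assms])
qed
lemma bij_betw_conjugate_image:
  assumes "\<And>x. h (g x) = x" and "\<And>x. g (h x) = x"
  shows "{\<pi>'. bij_betw \<pi>' (h ` S) (h ` T)} = (\<lambda>\<pi>. h \<circ> \<pi> \<circ> g) ` {\<pi>. bij_betw \<pi> S T}"
proof -
  have "inj h" "inj g"
    using assms by (metis injI)+
  then have bij_h: "bij_betw h A (h ` A)" and bij_g: "bij_betw g (h ` A) A" for A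
    using assms(2) by (auto simp: bij_betw_def image_image intro: inj_on_subset)
  have "bij_betw (h \<circ> \<pi> \<circ> g) (h ` S) (h ` T)" if "bij_betw \<pi> S T" for \<pi>
    using bij_betw_trans[OF bij_betw_trans[OF bij_g that] bij_h] by (simp add: o_assoc)
  moreover have "\<pi>' = h \<circ> (g \<circ> \<pi>' \<circ> h) \<circ> g" and "bij_betw (g \<circ> \<pi>' \<circ> h) S T"
    if "bij_betw \<pi>' (h ` S) (h ` T)" for \<pi>'
    using bij_betw_trans[OF bij_betw_trans[OF bij_h that] bij_g] assms
    by (simp_all add: fun_eq_iff o_assoc)
  ultimately show ?thesis
    by blast
qed

lemma bottleneck_rescale:
  assumes k: "0 < k" and "\<And>x. \<mu>' (scale_point k x) = \<mu> x" and "\<And>x. \<nu>' (scale_point k x) = \<nu> x"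
  shows "bottleneck \<mu>' \<nu>' = ereal k * bottleneck \<mu> \<nu>"
proof -
  let ?h = "scale_slot k" and ?g = "scale_slot (1 / k)"
  have inverse: "?h (?g s) = s" "?g (?h s) = s" for s
    using k by (simp_all add: scale_slot_scale_slot scale_slot_1)
  have slots: "slots \<mu>' = ?h ` slots \<mu>" "slots \<nu>' = ?h ` slots \<nu>"
    using slots_rescale[of k \<mu>' \<mu>, OF k assms(2)] slots_rescale[of k \<nu>' \<nu>, OF k assms(3)] .
  have cost: "(SUP s\<in>slots \<mu>'. linf (slotpt s) (slotpt ((?h \<circ> \<pi> \<circ> ?g) s)))
      = ereal k * (SUP s\<in>slots \<mu>. linf (slotpt s) (slotpt (\<pi> s)))" for \<pi>
    by (simp add: slots(1) image_image inverse slotpt_scale_slot linf_rescale[OF k]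
        ereal_mult_pos_Sup[OF k])
  have bijections: "{\<pi>'. bij_betw \<pi>' (slots \<mu>') (slots \<nu>')}
      = (\<lambda>\<pi>. ?h \<circ> \<pi> \<circ> ?g) ` {\<pi>. bij_betw \<pi> (slots \<mu>) (slots \<nu>)}"
    unfolding slots by (rule bij_betw_conjugate_image[OF inverse])
  show ?thesis
    unfolding bottleneck_def bijections image_image cost
    by (simp add: ereal_mult_pos_Inf[OF k] image_image)
qed
section \<open>Coarsening and score\<close>

lemma coarsen_rescale:
  assumes "0 < k" and "\<And>u v. len X' u v = k * len X u v"
  shows "coarsen P (k * \<theta>) (V, E, X') = (hypernodes V E X \<theta>, coarseE V E X \<theta>, coarseX P V E X')"
proof -
  have "subE E X' (k * \<theta>) = subE E X \<theta>"
    using assms by (simp add: subE_def)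
  then show ?thesis
    by (simp add: coarsen_def hypernodes_def coarseE_def)
qed

lemma finite_hypernodes: "finite V \<Longrightarrow> finite (hypernodes V E X \<theta>)"
  by (simp add: hypernodes_def quotient_def)

lemma hypernode_subset:
  assumes "E \<subseteq> V \<times> V" and "H \<in> hypernodes V E X \<theta>"
  shows "H \<noteq> {}" and "H \<subseteq> V"
proof -
  let ?r = "subE E X \<theta> \<union> converse (subE E X \<theta>)"
  obtain x where x: "x \<in> V" "H = ?r\<^sup>* `` {x}"
    using assms(2) unfolding hypernodes_def quotient_def by blast
  then show "H \<noteq> {}"
    by blast
  have "?r `` V \<subseteq> V"
    using assms(1) by (auto simp: subE_def)
  then have "?r\<^sup>* `` V = V"
    by (rule Image_closed_trancl)
  then show "H \<subseteq> V"
    using x by auto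
qed

lemma coarseX_similarity:
  assumes "finite H" and "H \<noteq> {}"
  shows "coarseX P V E (similarity R A k \<circ> X) H = similarity R A k (coarseX P V E X H)"
proof (cases P)
  case AvgPos
  have "(\<Sum>u\<in>H. similarity R A k (X u)) = k *\<^sub>R (R *v (\<Sum>u\<in>H. X u)) + real (card H) *\<^sub>R A"
    by (simp add: similarity_def sum.distrib scaleR_sum_right linear_sum[OF matrix_vector_mul_linear]
        o_def sum_constant_scaleR del: sum_constant)
  then show ?thesis
    using AvgPos assms
    by (simp add: coarseX_def similarity_def scaleR_add_right matrix_vector_mult_scaleR)
next
  case DegPos
  then show ?thesis
    by (simp add: coarseX_def)
qed

lemma coarsen_simact:
  assumes "sg_wf (V, E, X)" and "orthogonal_matrix R" and "0 < k"
  obtains Y where "coarsen P (k * \<theta>) (simact R A k (V, E, X)) = (hypernodes V E X \<theta>, coarseE V E X \<theta>, Y)"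
    and "\<And>H. H \<in> hypernodes V E X \<theta> \<Longrightarrow> Y H = similarity R A k (coarseX P V E X H)"
proof
  show "coarsen P (k * \<theta>) (simact R A k (V, E, X))
      = (hypernodes V E X \<theta>, coarseE V E X \<theta>, coarseX P V E (similarity R A k \<circ> X))"
    unfolding simact_similarity using assms(2,3) by (intro coarsen_rescale len_similarity)
  fix H assume "H \<in> hypernodes V E X \<theta>"
  moreover have "finite V" "E \<subseteq> V \<times> V"
    using assms(1) by (simp_all add: sg_wf_def)
  ultimately show "coarseX P V E (similarity R A k \<circ> X) H = similarity R A k (coarseX P V E X H)"
    using hypernode_subset finite_subset by (metis coarseX_similarity)
qed

lemma sg_eq_coarsen_simact:
  assumes "sg_wf (V, E, X)" and "orthogonal_matrix R" and "0 < k"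
  shows "sg_eq (coarsen P (k * \<theta>) (simact R A k (V, E, X))) (simact R A k (coarsen P \<theta> (V, E, X)))"
proof -
  obtain Y where "coarsen P (k * \<theta>) (simact R A k (V, E, X)) = (hypernodes V E X \<theta>, coarseE V E X \<theta>, Y)"
    and "\<And>H. H \<in> hypernodes V E X \<theta> \<Longrightarrow> Y H = similarity R A k (coarseX P V E X H)"
    using coarsen_simact[OF assms, where P = P and \<theta> = \<theta> and A = A] by blast
  then show ?thesis
    by (simp add: sg_eq_def coarsen_def simact_similarity)
qed

lemma dBth_simact:
  assumes "sg_wf (V, E, X)" and R: "orthogonal_matrix R" and k: "0 < k"
  shows "dBth P D (simact R A k (V, E, X)) (k * \<theta>) = ereal k * dBth P D (V, E, X) \<theta>"
proof -
  obtain Y where coarse: "coarsen P (k * \<theta>) (simact R A k (V, E, X))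
      = (hypernodes V E X \<theta>, coarseE V E X \<theta>, Y)"
    and Y: "\<And>H. H \<in> hypernodes V E X \<theta> \<Longrightarrow> Y H = similarity R A k (coarseX P V E X H)"
    using coarsen_simact[OF assms, where P = P and \<theta> = \<theta> and A = A] by blast
  have "finite V"
    using assms(1) by (simp add: sg_wf_def)
  have "PD D (simact R A k (V, E, X)) (scale_point k x) = PD D (V, E, X) x" for x
    unfolding simact_similarity using k len_similarity[OF R k] \<open>finite V\<close> by (rule PD_rescale)
  moreover have "len Y H H' = k * len (coarseX P V E X) H H'"
    if "H \<in> hypernodes V E X \<theta>" "H' \<in> hypernodes V E X \<theta>" for H H'
    using len_similarity[OF R k, where X = "coarseX P V E X" and A = A and u = H and v = H'] that
    by (simp add: len_def Y)
  then have "PD D (coarsen P (k * \<theta>) (simact R A k (V, E, X))) (scale_point k x)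
      = PD D (coarsen P \<theta> (V, E, X)) x" for x
    unfolding coarse using k by (simp add: coarsen_def PD_rescale finite_hypernodes \<open>finite V\<close>)
  ultimately show ?thesis
    unfolding dBth_def by (rule bottleneck_rescale[OF k])
qed

lemma dBmax_simact:
  assumes "sg_wf (V, E, X)" and "orthogonal_matrix R" and k: "0 < k"
  shows "dBmax P D (simact R A k (V, E, X)) = ereal k * dBmax P D (V, E, X)"
proof -
  have "x \<in> (\<lambda>\<theta>. k * \<theta>) ` {0..}" if "0 \<le> x" for x
    using k that by (intro image_eqI[of x _ "x / k"]) auto
  then have "(\<lambda>\<theta>. k * \<theta>) ` {0..} = {0::real..}"
    using k by auto
  then have "dBmax P D (simact R A k (V, E, X)) = (SUP \<theta>\<in>{0..}. dBth P D (simact R A k (V, E, X)) (k * \<theta>))"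
    unfolding dBmax_def by (metis image_image)
  then show ?thesis
    by (simp add: dBth_simact[OF assms] dBmax_def ereal_mult_pos_Sup[OF k] image_image)
qed

lemma score_simact:
  assumes "sg_wf (V, E, X)" and "orthogonal_matrix R" and k: "0 < k"
  shows "score P D (simact R A k (V, E, X)) (k * \<theta>) = score P D (V, E, X) \<theta>"
proof -
  obtain Y where "coarsen P (k * \<theta>) (simact R A k (V, E, X)) = (hypernodes V E X \<theta>, coarseE V E X \<theta>, Y)"
    using coarsen_simact[OF assms, where P = P and \<theta> = \<theta> and A = A] by blast
  then have "fst (snd (coarsen P (k * \<theta>) (simact R A k (V, E, X))))
      = fst (snd (coarsen P \<theta> (V, E, X)))"
    by (simp add: coarsen_def)
  moreover have "fst (snd (simact R A k (V, E, X))) = E"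
    by (simp add: simact_def)
  moreover have "1 / (k * m) * (k * d) = 1 / m * d" for m d :: real
    using k by simp
  ultimately show ?thesis
    by (simp add: score_def dBth_simact[OF assms] dBmax_simact[OF assms] real_of_ereal_mult)
qed

lemma is_minimizer_rescale:
  fixes f g :: "real \<Rightarrow> real"
  assumes k: "0 < k" and g: "\<And>\<theta>. g (k * \<theta>) = f \<theta>"
  shows "is_minimizer g (k * \<theta>) \<longleftrightarrow> is_minimizer f \<theta>"
proof -
  have "(\<forall>\<beta>\<ge>0. g (k * \<theta>) \<le> g \<beta>) \<longleftrightarrow> (\<forall>\<theta>'\<ge>0. f \<theta> \<le> f \<theta>')"
  proof
    assume "\<forall>\<beta>\<ge>0. g (k * \<theta>) \<le> g \<beta>"
    then show "\<forall>\<theta>'\<ge>0. f \<theta> \<le> f \<theta>'"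
      using k by (metis g mult_nonneg_nonneg less_imp_le)
  next
    assume "\<forall>\<theta>'\<ge>0. f \<theta> \<le> f \<theta>'"
    then show "\<forall>\<beta>\<ge>0. g (k * \<theta>) \<le> g \<beta>"
      using k g[of "\<beta> / k" for \<beta>] by (simp add: g)
  qed
  then show ?thesis
    using k by (simp add: is_minimizer_def zero_le_mult_iff)
qed

lemma minimizers_rescale:
  fixes f g :: "real \<Rightarrow> real"
  assumes "0 < k" and "\<And>\<theta>. g (k * \<theta>) = f \<theta>"
  shows "{\<beta>. is_minimizer g \<beta>} = (\<lambda>\<theta>. k * \<theta>) ` {\<theta>. is_minimizer f \<theta>}"
proof -
  note rescale = is_minimizer_rescale[of k g f, OF assms]
  show ?thesis
  proof (intro set_eqI iffI)
    fix \<beta>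
    assume "\<beta> \<in> {\<beta>. is_minimizer g \<beta>}"
    then have "is_minimizer f (\<beta> / k)"
      using rescale[of "\<beta> / k"] assms(1) by simp
    then show "\<beta> \<in> (\<lambda>\<theta>. k * \<theta>) ` {\<theta>. is_minimizer f \<theta>}"
      using assms(1) by (intro image_eqI[of \<beta> _ "\<beta> / k"]) auto
  next
    fix \<beta>
    assume "\<beta> \<in> (\<lambda>\<theta>. k * \<theta>) ` {\<theta>. is_minimizer f \<theta>}"
    then show "\<beta> \<in> {\<beta>. is_minimizer g \<beta>}"
      using rescale by auto
  qed
qed

theorem proposition3:
  fixes V :: "'v set" and E :: "('v \<times> 'v) set" and X :: "'v \<Rightarrow> real ^ 'p"
    and R :: "real ^ 'p ^ 'p" and A :: "real ^ 'p" and k :: real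
    and P :: "'v positioning" and D :: "nat set"
  assumes "sg_wf (V, E, X)" and "E \<noteq> {}" and "finite D" and "valid_pos P"
    and "orthogonal_matrix R" and "k > 0"
    and "0 < dBmax P D (V, E, X)" and "dBmax P D (V, E, X) < \<infinity>"
    and "\<exists>\<theta>\<ge>0. dBth P D (V, E, X) \<theta> = dBmax P D (V, E, X)"
  shows "(\<forall>\<theta>\<ge>0. score P D (simact R A k (V, E, X)) (k * \<theta>) = score P D (V, E, X) \<theta>)
    \<and> {\<beta>. is_minimizer (score P D (simact R A k (V, E, X))) \<beta>}
        = (\<lambda>\<theta>. k * \<theta>) ` {\<theta>. is_minimizer (score P D (V, E, X)) \<theta>}
    \<and> (\<forall>\<theta>s. is_minimizer (score P D (V, E, X)) \<theta>s \<longrightarrow>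
         is_minimizer (score P D (simact R A k (V, E, X))) (k * \<theta>s)
         \<and> sg_eq (coarsen P (k * \<theta>s) (simact R A k (V, E, X)))
                 (simact R A k (coarsen P \<theta>s (V, E, X))))"
proof -
  \<comment> \<open>In particular, if
    \<open>dBmax\<close> were \<open>0\<close> or \<open>\<infinity>\<close>, division by zero and \<open>real_of_ereal\<close> would make the
    topological term vanish on both sides alike.\<close>
  let ?G = "(V, E, X)" and ?G' = "simact R A k (V, E, X)"
  note similarity = assms(1,5,6)
  have score: "score P D ?G' (k * \<theta>) = score P D ?G \<theta>" for \<theta>
    by (rule score_simact[OF similarity])
  show ?thesis
    using score sg_eq_coarsen_simact[OF similarity]
      minimizers_rescale[of k "score P D ?G'" "score P D ?G", OF assms(6) score]
      is_minimizer_rescale[of k "score P D ?G'" "score P D ?G", OF assms(6) score]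
    by blast
qed

end
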